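(* Let $q\in(0,1]$. Assume [A7$'$]: for some $R>0$, (i) for every $T\in\mathbb T$, $\mathbb H_T$ is almost surely thrice differentiable in $\theta$ on $B=\{\theta\in\Theta:|\theta-\theta^*|<R\}$; (ii) $\|a_T\|\partial_\theta\mathbb H_T(\theta^* )=O_p(1)$; (iii) $\|a_T\|^2\sup_{\theta\in B}|\partial_\theta^2\mathbb H_T(\theta)|=O_p(1)$; (iv) $\|a_T\|^2\sup_{\theta\in B}|\partial_\theta^3\mathbb H_T(\theta)|=O_p(1)$. Then the following hold: [A8] for all $M>0$, $\sup_{u\in\mathbb U_T,\ |u|<M}|\mathbb H_T(\theta^*+a_Tu)-\mathbb H_T(\theta^* )|=O_p(1)$ as $T\to\infty$; [A9] for all $M>0$, $\sup_{u,v\in\mathbb U_T,\ |u|,|v|<M,\ u\ne v}\frac{|\mathbb H_T(\theta^*+a_Tu)-\mathbb H_T(\theta^*+a_Tv)|}{|u-v|^q}=O_p(1)$ as $T\to\infty$.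
   Context: Let $\Theta\subset\mathbb R^{\mathsf p}$ be a bounded open set with closure $\overline\Theta$ and $\theta^*\in\Theta$. Let $(\Omega,\mathcal F,P)$ be a probability space, $\mathbb T\subset\mathbb R_{\ge0}$ with $\sup\mathbb T=\infty$; limits $T\to\infty$ are along $\mathbb T$. For each $T\in\mathbb T$, $\mathbb H_T:\Omega\times\overline\Theta\to\mathbb R$ is a random field continuous in $\theta$ for every $\omega$. $a_T$ is a deterministic invertible diagonal $\mathsf p\times\mathsf p$ matrix with $\|a_T\|\to0$ ($\|\cdot\|$ the spectral norm), and $\mathbb U_T=\{u\in\mathbb R^{\mathsf p}:\theta^*+a_Tu\in\overline\Theta\}$. $\partial_\theta^k\mathbb H_T$ is the $k$-th derivative tensor in $\theta$. $X_T=O_p(1)$ means tightness: for every $\epsilon>0$ there are $\mathcal T\in\mathbb T$, $M>0$ with $P(|X_T|>M)<\epsilon$ for $T\ge\mathcal T$. *)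

theory Defs
  imports "HOL-Probability.Probability"
begin

definition outer_prob :: "'w measure \<Rightarrow> 'w set \<Rightarrow> real" where
  "outer_prob P A = (INF B \<in> {B \<in> sets P. A \<inter> space P \<subseteq> B}. measure P B)"

text \<open>Tightness along the index set TT (limits T to infinity along TT):
  X_T = O_p(1). Values in ereal so that suprema (possibly infinite) can be used directly.\<close>
definition O_p1 :: "'w measure \<Rightarrow> real set \<Rightarrow> (real \<Rightarrow> 'w \<Rightarrow> ereal) \<Rightarrow> bool" where
  "O_p1 P TT X \<longleftrightarrow>
     (\<forall>\<epsilon>>0. \<exists>T0\<in>TT. \<exists>M>0. \<forall>T\<in>TT. T \<ge> T0 \<longrightarrow>
        outer_prob P {\<omega> \<in> space P. ereal M < \<bar>X T \<omega>\<bar>} < \<epsilon>)"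

definition thrice_diff_on ::
  "('a::real_normed_vector \<Rightarrow> real) \<Rightarrow> ('a \<Rightarrow> 'a \<Rightarrow>\<^sub>L real)
   \<Rightarrow> ('a \<Rightarrow> 'a \<Rightarrow>\<^sub>L ('a \<Rightarrow>\<^sub>L real))
   \<Rightarrow> ('a \<Rightarrow> 'a \<Rightarrow>\<^sub>L ('a \<Rightarrow>\<^sub>L ('a \<Rightarrow>\<^sub>L real))) \<Rightarrow> 'a set \<Rightarrow> bool" where
  "thrice_diff_on f D1 D2 D3 S \<longleftrightarrow>
     (\<forall>\<theta>\<in>S. (f has_derivative blinfun_apply (D1 \<theta>)) (at \<theta>)
           \<and> (D1 has_derivative blinfun_apply (D2 \<theta>)) (at \<theta>)
           \<and> (D2 has_derivative blinfun_apply (D3 \<theta>)) (at \<theta>))"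

end

theory Submission imports Defs begin

(* Choose a ball of radius r around \<theta>s inside B = {\<theta> \<in> \<Theta>. |\<theta> - \<theta>s| < R}. Outside an event of
  small probability, |a_T| |D1(\<theta>s)| \<le> M1 and |a_T|^2 |D2| \<le> M2 on B; once |a_T| K \<le> r, two
  applications of the mean value inequality make u \<mapsto> H_T(\<theta>s + a_T u) Lipschitz on |u| \<le> K
  with constant M1 + M2 K. This bounds the increments in A8 by (M1 + M2 K) K and the Hoelder
  quotients in A9 by (M1 + M2 K) (2K)^(1-q).
  Only openness of \<Theta>, \<theta>s \<in> \<Theta>, R > 0, |a_T| \<rightarrow> 0, q \<le> 1 and A7 (i)-(iii) are used;
  since tightness is defined through outer probability, the suprema need not be measurable. *)

lemma outer_prob_le_measure:
  assumes "B \<in> sets P" "A \<inter> space P \<subseteq> B"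
  shows "outer_prob P A \<le> measure P B"
  unfolding outer_prob_def using assms by (intro cINF_lower) (auto intro: bdd_belowI[of _ 0])

lemma outer_prob_lessE:
  assumes "outer_prob P A < e"
  obtains B where "B \<in> sets P" "A \<inter> space P \<subseteq> B" "measure P B < e"
proof -
  have "{B \<in> sets P. A \<inter> space P \<subseteq> B} \<noteq> {}" by auto
  with assms have "\<exists>B\<in>{B \<in> sets P. A \<inter> space P \<subseteq> B}. measure P B < e"
    unfolding outer_prob_def by (subst (asm) cINF_less_iff) (auto intro: bdd_belowI[of _ 0])
  then show thesis using that by blast
qed

lemma O_p1_exceptional_setsE:
  assumes "O_p1 P TT X" "0 < \<epsilon>"
  obtains T0 M where "T0 \<in> TT"
    "\<And>T. T \<in> TT \<Longrightarrow> T0 \<le> T \<Longrightarrow>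
       \<exists>E\<in>sets P. measure P E < \<epsilon> \<and> (\<forall>\<omega>\<in>space P - E. \<bar>X T \<omega>\<bar> \<le> ereal M)"
proof -
  obtain T0 M where "T0 \<in> TT" and tight: "\<forall>T\<in>TT. T0 \<le> T \<longrightarrow>
      outer_prob P {\<omega> \<in> space P. ereal M < \<bar>X T \<omega>\<bar>} < \<epsilon>"
    using assms(1)[unfolded O_p1_def, rule_format, OF assms(2)] by blast
  have "\<exists>E\<in>sets P. measure P E < \<epsilon> \<and> (\<forall>\<omega>\<in>space P - E. \<bar>X T \<omega>\<bar> \<le> ereal M)"
    if T: "T \<in> TT" "T0 \<le> T" for T
  proof -
    obtain B where "B \<in> sets P" "{\<omega> \<in> space P. ereal M < \<bar>X T \<omega>\<bar>} \<inter> space P \<subseteq> B"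
        "measure P B < \<epsilon>"
      by (rule outer_prob_lessE[OF tight[rule_format, OF T]])
    then show ?thesis by (intro bexI[of _ B]) (auto simp: not_less)
  qed
  with \<open>T0 \<in> TT\<close> show thesis by (rule that)
qed

lemma O_p1_exceptional_setsI:
  assumes small: "\<And>\<epsilon>. 0 < \<epsilon> \<Longrightarrow> \<exists>T0\<in>TT. \<exists>M. \<forall>T\<in>TT. T0 \<le> T \<longrightarrow>
      (\<exists>E\<in>sets P. measure P E < \<epsilon> \<and> (\<forall>\<omega>\<in>space P - E. \<bar>X T \<omega>\<bar> \<le> ereal M))"
  shows "O_p1 P TT X"
  unfolding O_p1_def
proof (intro allI impI)
  fix \<epsilon> :: real assume "0 < \<epsilon>"
  obtain T0 M where "T0 \<in> TT" and small: "\<forall>T\<in>TT. T0 \<le> T \<longrightarrow>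
      (\<exists>E\<in>sets P. measure P E < \<epsilon> \<and> (\<forall>\<omega>\<in>space P - E. \<bar>X T \<omega>\<bar> \<le> ereal M))"
    using small[OF \<open>0 < \<epsilon>\<close>] by blast
  have "outer_prob P {\<omega> \<in> space P. ereal (max M 0 + 1) < \<bar>X T \<omega>\<bar>} < \<epsilon>"
    if T: "T \<in> TT" "T0 \<le> T" for T
  proof -
    obtain E where E: "E \<in> sets P" "measure P E < \<epsilon>"
      and bound: "\<forall>\<omega>\<in>space P - E. \<bar>X T \<omega>\<bar> \<le> ereal M"
      using small T by blast
    have "\<bar>X T \<omega>\<bar> \<le> ereal (max M 0 + 1)" if "\<omega> \<in> space P - E" for \<omega>
      using bound that by (meson ereal_less_eq(3) max.cobounded1 less_add_one order_trans less_imp_le)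
    then have "{\<omega> \<in> space P. ereal (max M 0 + 1) < \<bar>X T \<omega>\<bar>} \<inter> space P \<subseteq> E"
      by (auto simp: not_less[symmetric])
    with E show ?thesis by (meson outer_prob_le_measure le_less_trans)
  qed
  with \<open>T0 \<in> TT\<close> show "\<exists>T0\<in>TT. \<exists>M>0. \<forall>T\<in>TT. T0 \<le> T \<longrightarrow>
      outer_prob P {\<omega> \<in> space P. ereal M < \<bar>X T \<omega>\<bar>} < \<epsilon>"
    by (intro bexI exI[of _ "max M 0 + 1"]) auto
qed

lemma O_p1_of_bounded_by:
  assumes X: "O_p1 P TT X" and Y: "O_p1 P TT Y"
    and Q: "\<forall>T\<in>TT. AE \<omega> in P. Q T \<omega>" and "T1 \<in> TT"
    and bound: "\<And>T \<omega> M N. T \<in> TT \<Longrightarrow> T1 \<le> T \<Longrightarrow> \<omega> \<in> space P \<Longrightarrow> Q T \<omega> \<Longrightarrow>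
        \<bar>X T \<omega>\<bar> \<le> ereal M \<Longrightarrow> \<bar>Y T \<omega>\<bar> \<le> ereal N \<Longrightarrow> \<bar>Z T \<omega>\<bar> \<le> ereal (g M N)"
  shows "O_p1 P TT Z"
proof (rule O_p1_exceptional_setsI)
  fix \<epsilon> :: real assume "0 < \<epsilon>"
  then have "0 < \<epsilon> / 2" by simp
  obtain TX MX where "TX \<in> TT" and X_small: "\<And>T. T \<in> TT \<Longrightarrow> TX \<le> T \<Longrightarrow>
      \<exists>E\<in>sets P. measure P E < \<epsilon> / 2 \<and> (\<forall>\<omega>\<in>space P - E. \<bar>X T \<omega>\<bar> \<le> ereal MX)"
    by (rule O_p1_exceptional_setsE[OF X \<open>0 < \<epsilon> / 2\<close>]) (rule that)
  obtain TY MY where "TY \<in> TT" and Y_small: "\<And>T. T \<in> TT \<Longrightarrow> TY \<le> T \<Longrightarrow>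
      \<exists>E\<in>sets P. measure P E < \<epsilon> / 2 \<and> (\<forall>\<omega>\<in>space P - E. \<bar>Y T \<omega>\<bar> \<le> ereal MY)"
    by (rule O_p1_exceptional_setsE[OF Y \<open>0 < \<epsilon> / 2\<close>]) (rule that)
  define T0 where "T0 = max (max TX TY) T1"
  have "T0 \<in> TT" using \<open>TX \<in> TT\<close> \<open>TY \<in> TT\<close> \<open>T1 \<in> TT\<close> by (simp add: T0_def max_def)
  have "\<exists>E\<in>sets P. measure P E < \<epsilon> \<and> (\<forall>\<omega>\<in>space P - E. \<bar>Z T \<omega>\<bar> \<le> ereal (g MX MY))"
    if T: "T \<in> TT" "T0 \<le> T" for T
  proof -
    have "TX \<le> T" "TY \<le> T" "T1 \<le> T" using T(2) by (auto simp: T0_def)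
    obtain E1 where E1: "E1 \<in> sets P" "measure P E1 < \<epsilon> / 2"
      and X_bound: "\<forall>\<omega>\<in>space P - E1. \<bar>X T \<omega>\<bar> \<le> ereal MX"
      using X_small[OF T(1) \<open>TX \<le> T\<close>] by blast
    obtain E2 where E2: "E2 \<in> sets P" "measure P E2 < \<epsilon> / 2"
      and Y_bound: "\<forall>\<omega>\<in>space P - E2. \<bar>Y T \<omega>\<bar> \<le> ereal MY"
      using Y_small[OF T(1) \<open>TY \<le> T\<close>] by blast
    from Q T(1) have "AE \<omega> in P. Q T \<omega>" by blast
    then obtain N where Q_holds: "\<And>\<omega>. \<omega> \<in> space P - N \<Longrightarrow> Q T \<omega>" and "N \<in> null_sets P"
      by (erule AE_E3)
    have "measure P (E1 \<union> E2 \<union> N) = measure P (E1 \<union> E2)"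
      using E1 E2 \<open>N \<in> null_sets P\<close> by (intro measure_Un_null_set) auto
    also have "\<dots> \<le> measure P E1 + measure P E2"
      using E1 E2 by (intro measure_Un_le)
    finally have "measure P (E1 \<union> E2 \<union> N) < \<epsilon>" using E1 E2 by linarith
    moreover have "\<bar>Z T \<omega>\<bar> \<le> ereal (g MX MY)" if "\<omega> \<in> space P - (E1 \<union> E2 \<union> N)" for \<omega>
      using bound[OF T(1) \<open>T1 \<le> T\<close>] that X_bound Y_bound Q_holds by blast
    moreover have "E1 \<union> E2 \<union> N \<in> sets P" using E1 E2 \<open>N \<in> null_sets P\<close> by auto
    ultimately show ?thesis by blast
  qed
  with \<open>T0 \<in> TT\<close> show "\<exists>T0\<in>TT. \<exists>M. \<forall>T\<in>TT. T0 \<le> T \<longrightarrow>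
      (\<exists>E\<in>sets P. measure P E < \<epsilon> \<and> (\<forall>\<omega>\<in>space P - E. \<bar>Z T \<omega>\<bar> \<le> ereal M))" by blast
qed

lemma lipschitz_on_cball_of_second_derivative_bound:
  fixes f :: "'a::real_normed_vector \<Rightarrow> 'b::real_normed_vector"
    and D1 :: "'a \<Rightarrow> 'a \<Rightarrow>\<^sub>L 'b" and D2 :: "'a \<Rightarrow> 'a \<Rightarrow>\<^sub>L ('a \<Rightarrow>\<^sub>L 'b)"
  assumes deriv: "\<And>\<theta>. \<theta> \<in> cball c \<rho> \<Longrightarrow> (f has_derivative blinfun_apply (D1 \<theta>)) (at \<theta>)
                                    \<and> (D1 has_derivative blinfun_apply (D2 \<theta>)) (at \<theta>)"
    and D2_bound: "\<And>\<theta>. \<theta> \<in> cball c \<rho> \<Longrightarrow> norm (D2 \<theta>) \<le> B"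
    and x: "x \<in> cball c \<rho>" and y: "y \<in> cball c \<rho>"
  shows "norm (f x - f y) \<le> (norm (D1 c) + B * \<rho>) * norm (x - y)"
proof -
  have c: "c \<in> cball c \<rho>" using x by (metis mem_cball zero_le_dist order_trans centre_in_cball)
  have D1_lipschitz: "norm (D1 \<theta> - D1 c) \<le> B * norm (\<theta> - c)" if "\<theta> \<in> cball c \<rho>" for \<theta>
    by (rule differentiable_bound[OF convex_cball _ _ that c])
       (use deriv D2_bound in \<open>auto intro: has_derivative_at_withinI simp: norm_blinfun.rep_eq\<close>)
  have D1_bound: "norm (D1 \<theta>) \<le> norm (D1 c) + B * \<rho>" if "\<theta> \<in> cball c \<rho>" for \<theta>
  proof -
    have "0 \<le> B" using D2_bound[OF c] norm_ge_zero order_trans by blast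
    moreover have "norm (\<theta> - c) \<le> \<rho>" using that by (simp add: dist_norm norm_minus_commute)
    ultimately have "B * norm (\<theta> - c) \<le> B * \<rho>" by (intro mult_left_mono)
    then show ?thesis using D1_lipschitz[OF that] norm_triangle_sub[of "D1 \<theta>" "D1 c"] by linarith
  qed
  show ?thesis
    by (rule differentiable_bound[OF convex_cball _ _ x y])
       (use deriv D1_bound in \<open>auto intro: has_derivative_at_withinI simp: norm_blinfun.rep_eq\<close>)
qed

lemma add_bounded_linear_mem_cball:
  assumes "bounded_linear L" "norm u \<le> K"
  shows "c + L u \<in> cball c (onorm L * K)"
  using onorm[OF assms(1), of u] mult_left_mono[OF assms(2) onorm_pos_le[OF assms(1)]]
  by (simp add: dist_norm)

lemma lipschitz_rescaled_of_derivative_bounds: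
  fixes f :: "'a::real_normed_vector \<Rightarrow> 'b::real_normed_vector" and L :: "'a \<Rightarrow> 'a"
    and D1 :: "'a \<Rightarrow> 'a \<Rightarrow>\<^sub>L 'b" and D2 :: "'a \<Rightarrow> 'a \<Rightarrow>\<^sub>L ('a \<Rightarrow>\<^sub>L 'b)"
  assumes L: "bounded_linear L"
    and deriv: "\<And>\<theta>. \<theta> \<in> cball c (onorm L * K) \<Longrightarrow> (f has_derivative blinfun_apply (D1 \<theta>)) (at \<theta>)
                                    \<and> (D1 has_derivative blinfun_apply (D2 \<theta>)) (at \<theta>)"
    and D1_bound: "onorm L * norm (D1 c) \<le> M1"
    and D2_bound: "\<And>\<theta>. \<theta> \<in> cball c (onorm L * K) \<Longrightarrow> (onorm L)\<^sup>2 * norm (D2 \<theta>) \<le> M2"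
    and u: "norm u \<le> K" and v: "norm v \<le> K"
  shows "norm (f (c + L u) - f (c + L v)) \<le> (M1 + M2 * K) * norm (u - v)"
proof -
  define \<alpha> where "\<alpha> = onorm L"
  have "0 \<le> \<alpha>" unfolding \<alpha>_def using L by (rule onorm_pos_le)
  have "0 \<le> K" using u norm_ge_zero order_trans by blast
  have "0 \<le> M1" using D1_bound \<open>0 \<le> \<alpha>\<close> unfolding \<alpha>_def[symmetric]
    by (meson mult_nonneg_nonneg norm_ge_zero order_trans)
  have "0 \<le> M2" using D2_bound[of c] \<open>0 \<le> \<alpha>\<close> \<open>0 \<le> K\<close> unfolding \<alpha>_def[symmetric]
    by (meson centre_in_cball mult_nonneg_nonneg norm_ge_zero zero_le_power2 order_trans)
  have L_le: "norm (L w) \<le> \<alpha> * norm w" for w unfolding \<alpha>_def using L by (rule onorm)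
  interpret L: bounded_linear L by (rule L)
  have L_diff: "(c + L u) - (c + L v) = L (u - v)" by (simp add: L.diff)
  show ?thesis
  proof (cases "\<alpha> = 0")
    case True
    then show ?thesis using L_le[of u] L_le[of v] \<open>0 \<le> M1\<close> \<open>0 \<le> M2\<close> \<open>0 \<le> K\<close> by simp
  next
    case False
    with \<open>0 \<le> \<alpha>\<close> have "0 < \<alpha>" by simp
    have in_cball: "c + L w \<in> cball c (\<alpha> * K)" if "norm w \<le> K" for w
      unfolding \<alpha>_def using L that by (rule add_bounded_linear_mem_cball)
    have "norm (D2 \<theta>) \<le> M2 / \<alpha>\<^sup>2" if "\<theta> \<in> cball c (\<alpha> * K)" for \<theta>
      using D2_bound[of \<theta>] that \<open>0 < \<alpha>\<close> by (simp add: \<alpha>_def pos_le_divide_eq mult.commute)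
    then have "norm (f (c + L u) - f (c + L v))
        \<le> (norm (D1 c) + M2 / \<alpha>\<^sup>2 * (\<alpha> * K)) * norm ((c + L u) - (c + L v))"
      using deriv unfolding \<alpha>_def[symmetric]
      by (intro lipschitz_on_cball_of_second_derivative_bound in_cball u v) auto
    also have "\<dots> = (\<alpha> * norm (D1 c) + M2 * K) / \<alpha> * norm (L (u - v))"
      using \<open>0 < \<alpha>\<close> by (simp add: L_diff L.diff field_simps power2_eq_square)
    also have "\<dots> \<le> (M1 + M2 * K) / \<alpha> * (\<alpha> * norm (u - v))"
      using D1_bound L_le \<open>0 < \<alpha>\<close> \<open>0 \<le> M1\<close> \<open>0 \<le> M2\<close> \<open>0 \<le> K\<close> unfolding \<alpha>_def[symmetric]
      by (intro mult_mono divide_right_mono) auto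
    also have "\<dots> = (M1 + M2 * K) * norm (u - v)" using \<open>0 < \<alpha>\<close> by simp
    finally show ?thesis .
  qed
qed

lemma lipschitz_imp_holder_quotient_le:
  fixes d n D \<Lambda> q :: real
  assumes "0 < n" "n \<le> D" "q \<le> 1" "0 \<le> \<Lambda>" "d \<le> \<Lambda> * n"
  shows "d / n powr q \<le> \<Lambda> * D powr (1 - q)"
proof -
  have "d / n powr q \<le> \<Lambda> * n / n powr q" using assms by (simp add: divide_right_mono)
  also have "\<dots> = \<Lambda> * n powr (1 - q)" using \<open>0 < n\<close> by (simp add: powr_diff)
  also have "\<dots> \<le> \<Lambda> * D powr (1 - q)" using assms by (intro mult_left_mono powr_mono2) auto
  finally show ?thesis .
qed

lemma abs_SUP_le_ereal:
  fixes g :: "'a \<Rightarrow> ereal"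
  assumes "S \<noteq> {}" "\<And>x. x \<in> S \<Longrightarrow> 0 \<le> g x" "\<And>x. x \<in> S \<Longrightarrow> g x \<le> ereal C"
  shows "\<bar>SUP x\<in>S. g x\<bar> \<le> ereal C"
proof -
  obtain x where "x \<in> S" using assms(1) by blast
  then have "0 \<le> (SUP x\<in>S. g x)" using assms(2) by (meson SUP_upper order_trans)
  moreover have "(SUP x\<in>S. g x) \<le> ereal C" using assms(3) by (rule SUP_least)
  ultimately show ?thesis by (simp add: abs_ereal_pos)
qed

lemma le_of_abs_SUP_le_ereal:
  fixes g :: "'a \<Rightarrow> real"
  assumes "\<bar>SUP x\<in>S. ereal (g x)\<bar> \<le> ereal N" "x \<in> S"
  shows "g x \<le> N"
proof -
  have "ereal (g x) \<le> (SUP x\<in>S. ereal (g x))" using assms(2) by (rule SUP_upper)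
  also have "\<dots> \<le> \<bar>SUP x\<in>S. ereal (g x)\<bar>" by (cases "SUP x\<in>S. ereal (g x)") auto
  finally have "ereal (g x) \<le> ereal N" using assms(1) by (rule order_trans)
  then show ?thesis by simp
qed

lemma abs_SUP_increment_le:
  fixes L :: "'a::real_normed_vector \<Rightarrow> 'b::real_normed_vector" and f :: "'b \<Rightarrow> real"
  assumes lipschitz: "\<And>u v. norm u \<le> K \<Longrightarrow> norm v \<le> K \<Longrightarrow> \<bar>f (c + L u) - f (c + L v)\<bar> \<le> \<Lambda> * norm (u - v)"
    and "0 \<le> \<Lambda>" "0 < K" "L 0 = 0" and admissible: "\<And>u. norm u < K \<Longrightarrow> c + L u \<in> S"
  shows "\<bar>SUP u\<in>{u. c + L u \<in> S \<and> norm u < K}. ereal \<bar>f (c + L u) - f c\<bar>\<bar> \<le> ereal (\<Lambda> * K)"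
proof (rule abs_SUP_le_ereal)
  have "0 \<in> {u. c + L u \<in> S \<and> norm u < K}" using admissible \<open>0 < K\<close> by simp
  then show "{u. c + L u \<in> S \<and> norm u < K} \<noteq> {}" by blast
  fix u assume "u \<in> {u. c + L u \<in> S \<and> norm u < K}"
  then have "norm u \<le> K" by simp
  then have "\<bar>f (c + L u) - f c\<bar> \<le> \<Lambda> * K"
    using lipschitz[of u 0] mult_left_mono[OF \<open>norm u \<le> K\<close> \<open>0 \<le> \<Lambda>\<close>] assms by simp
  then show "ereal \<bar>f (c + L u) - f c\<bar> \<le> ereal (\<Lambda> * K)" by simp
qed simp

lemma abs_SUP_holder_quotient_le:
  fixes L :: "'a::euclidean_space \<Rightarrow> 'b::real_normed_vector" and f :: "'b \<Rightarrow> real"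
  assumes lipschitz: "\<And>u v. norm u \<le> K \<Longrightarrow> norm v \<le> K \<Longrightarrow> \<bar>f (c + L u) - f (c + L v)\<bar> \<le> \<Lambda> * norm (u - v)"
    and "0 \<le> \<Lambda>" "0 < K" "q \<le> 1" and admissible: "\<And>u. norm u < K \<Longrightarrow> c + L u \<in> S"
  shows "\<bar>SUP (u, v)\<in>{(u, v). c + L u \<in> S \<and> c + L v \<in> S \<and> norm u < K \<and> norm v < K \<and> u \<noteq> v}.
            ereal (\<bar>f (c + L u) - f (c + L v)\<bar> / norm (u - v) powr q)\<bar>
         \<le> ereal (\<Lambda> * (2 * K) powr (1 - q))"
proof (rule abs_SUP_le_ereal)
  define b :: 'a where "b = (K / 2) *\<^sub>R (SOME i. i \<in> Basis)"
  have "norm b = K / 2" using \<open>0 < K\<close> by (simp add: b_def)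
  then have "(0, b) \<in> {(u, v). c + L u \<in> S \<and> c + L v \<in> S \<and> norm u < K \<and> norm v < K \<and> u \<noteq> v}"
    using \<open>0 < K\<close> admissible by auto
  then show "{(u, v). c + L u \<in> S \<and> c + L v \<in> S \<and> norm u < K \<and> norm v < K \<and> u \<noteq> v} \<noteq> {}"
    by blast
  fix x assume "x \<in> {(u, v). c + L u \<in> S \<and> c + L v \<in> S \<and> norm u < K \<and> norm v < K \<and> u \<noteq> v}"
  then obtain u v where x: "x = (u, v)" and uv: "norm u < K" "norm v < K" "u \<noteq> v" by blast
  have "norm (u - v) \<le> 2 * K" using uv norm_triangle_ineq4[of u v] by linarith
  then have "\<bar>f (c + L u) - f (c + L v)\<bar> / norm (u - v) powr q \<le> \<Lambda> * (2 * K) powr (1 - q)"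
    using uv assms by (intro lipschitz_imp_holder_quotient_le) auto
  then show "(\<lambda>(u, v). ereal (\<bar>f (c + L u) - f (c + L v)\<bar> / norm (u - v) powr q)) x
      \<le> ereal (\<Lambda> * (2 * K) powr (1 - q))"
    by (simp add: x)
qed auto

locale rescaled_random_field =
  fixes P :: "'w measure"
    and \<Theta> :: "(real^'p::finite) set"
    and \<theta>s :: "real^'p"
    and TT :: "real set"
    and H :: "real \<Rightarrow> 'w \<Rightarrow> real^'p \<Rightarrow> real"
    and a :: "real \<Rightarrow> real^'p^'p"
    and R :: real
    and D1 :: "real \<Rightarrow> 'w \<Rightarrow> real^'p \<Rightarrow> (real^'p) \<Rightarrow>\<^sub>L real"
    and D2 :: "real \<Rightarrow> 'w \<Rightarrow> real^'p \<Rightarrow> (real^'p) \<Rightarrow>\<^sub>L ((real^'p) \<Rightarrow>\<^sub>L real)"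
    and D3 :: "real \<Rightarrow> 'w \<Rightarrow> real^'p \<Rightarrow> (real^'p) \<Rightarrow>\<^sub>L ((real^'p) \<Rightarrow>\<^sub>L ((real^'p) \<Rightarrow>\<^sub>L real))"
  assumes \<Theta>_open: "open \<Theta>" and \<theta>s: "\<theta>s \<in> \<Theta>" and R: "R > 0"
    and a_lim: "\<forall>\<epsilon>>0. \<exists>T0\<in>TT. \<forall>T\<in>TT. T \<ge> T0 \<longrightarrow> onorm (\<lambda>x. a T *v x) < \<epsilon>"
    and A7_i: "\<forall>T\<in>TT. AE \<omega> in P.
        thrice_diff_on (H T \<omega>) (D1 T \<omega>) (D2 T \<omega>) (D3 T \<omega>) {\<theta> \<in> \<Theta>. norm (\<theta> - \<theta>s) < R}"
    and A7_ii: "O_p1 P TT (\<lambda>T \<omega>. ereal (onorm (\<lambda>x. a T *v x) * norm (D1 T \<omega> \<theta>s)))"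
    and A7_iii: "O_p1 P TT (\<lambda>T \<omega>. SUP \<theta>\<in>{\<theta> \<in> \<Theta>. norm (\<theta> - \<theta>s) < R}.
        ereal ((onorm (\<lambda>x. a T *v x))\<^sup>2 * norm (D2 T \<omega> \<theta>)))"
begin

lemma O_p1_of_rescaled_lipschitz_bound:
  assumes "0 < K"
    and bound: "\<And>T \<omega> \<Lambda>. 0 \<le> \<Lambda> \<Longrightarrow>
        (\<And>u v. norm u \<le> K \<Longrightarrow> norm v \<le> K \<Longrightarrow>
           \<bar>H T \<omega> (\<theta>s + a T *v u) - H T \<omega> (\<theta>s + a T *v v)\<bar> \<le> \<Lambda> * norm (u - v)) \<Longrightarrow>
        (\<And>u. norm u < K \<Longrightarrow> \<theta>s + a T *v u \<in> closure \<Theta>) \<Longrightarrow> \<bar>Z T \<omega>\<bar> \<le> ereal (g \<Lambda>)"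
  shows "O_p1 P TT Z"
proof -
  define B where "B = {\<theta> \<in> \<Theta>. norm (\<theta> - \<theta>s) < R}"
  let ?\<alpha> = "\<lambda>T. onorm (\<lambda>x. a T *v x)"
  let ?X = "\<lambda>T \<omega>. ereal (?\<alpha> T * norm (D1 T \<omega> \<theta>s))"
  let ?Y = "\<lambda>T \<omega>. SUP \<theta>\<in>B. ereal ((?\<alpha> T)\<^sup>2 * norm (D2 T \<omega> \<theta>))"
  let ?Q = "\<lambda>T \<omega>. thrice_diff_on (H T \<omega>) (D1 T \<omega>) (D2 T \<omega>) (D3 T \<omega>) B"
  have X: "O_p1 P TT ?X" and Y: "O_p1 P TT ?Y" and Q: "\<forall>T\<in>TT. AE \<omega> in P. ?Q T \<omega>"
    using A7_ii A7_iii A7_i unfolding B_def by simp_all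
  obtain r where "0 < r" and r_B: "cball \<theta>s r \<subseteq> B"
  proof -
    obtain e where "0 < e" "ball \<theta>s e \<subseteq> \<Theta>" using \<Theta>_open \<theta>s open_contains_ball by blast
    then show thesis using R
      by (intro that[of "min e R / 2"]) (auto simp: B_def dist_norm norm_minus_commute subset_eq)
  qed
  have "0 < r / K" using \<open>0 < r\<close> \<open>0 < K\<close> by simp
  then obtain T1 where "T1 \<in> TT" and small: "\<forall>T\<in>TT. T1 \<le> T \<longrightarrow> ?\<alpha> T < r / K"
    using a_lim by blast
  show ?thesis
  proof (rule O_p1_of_bounded_by[OF X Y Q \<open>T1 \<in> TT\<close>])
    fix T \<omega> M N assume "T \<in> TT" "T1 \<le> T" "\<omega> \<in> space P" "?Q T \<omega>"
      and bounds: "\<bar>?X T \<omega>\<bar> \<le> ereal M" "\<bar>?Y T \<omega>\<bar> \<le> ereal N"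
    have "?\<alpha> T * K < r" using small \<open>T \<in> TT\<close> \<open>T1 \<le> T\<close> \<open>0 < K\<close> by (simp add: pos_less_divide_eq)
    then have ball_B: "cball \<theta>s (?\<alpha> T * K) \<subseteq> B"
      by (rule subset_trans[OF subset_cball[OF less_imp_le] r_B])
    have "0 \<le> ereal M" by (rule order_trans[OF abs_ereal_pos bounds(1)])
    moreover have "0 \<le> ereal N" by (rule order_trans[OF abs_ereal_pos bounds(2)])
    ultimately have "0 \<le> M + N * K" using \<open>0 < K\<close> by simp
    then show "\<bar>Z T \<omega>\<bar> \<le> ereal (g (M + N * K))"
    proof (rule bound)
      fix u v :: "real^'p" assume "norm u \<le> K" "norm v \<le> K"
      with \<open>?Q T \<omega>\<close> ball_B bounds
      show "\<bar>H T \<omega> (\<theta>s + a T *v u) - H T \<omega> (\<theta>s + a T *v v)\<bar> \<le> (M + N * K) * norm (u - v)"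
        unfolding thrice_diff_on_def
        by (intro lipschitz_rescaled_of_derivative_bounds[where f = "H T \<omega>", simplified])
           (auto intro: le_of_abs_SUP_le_ereal)
    next
      fix u :: "real^'p" assume "norm u < K"
      then have "\<theta>s + a T *v u \<in> cball \<theta>s (?\<alpha> T * K)"
        by (intro add_bounded_linear_mem_cball) auto
      then show "\<theta>s + a T *v u \<in> closure \<Theta>" using ball_B closure_subset unfolding B_def by blast
    qed
  qed
qed

lemma tight_increments:
  assumes "0 < K"
  shows "O_p1 P TT (\<lambda>T \<omega>. SUP u\<in>{u. \<theta>s + a T *v u \<in> closure \<Theta> \<and> norm u < K}.
           ereal \<bar>H T \<omega> (\<theta>s + a T *v u) - H T \<omega> \<theta>s\<bar>)"
  by (rule O_p1_of_rescaled_lipschitz_bound[OF \<open>0 < K\<close>, where g = "\<lambda>\<Lambda>. \<Lambda> * K"])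
     (use \<open>0 < K\<close> in \<open>auto intro!: abs_SUP_increment_le\<close>)

lemma tight_holder_quotients:
  assumes "0 < K" "q \<le> 1"
  shows "O_p1 P TT (\<lambda>T \<omega>.
           SUP (u, v)\<in>{(u, v). \<theta>s + a T *v u \<in> closure \<Theta> \<and> \<theta>s + a T *v v \<in> closure \<Theta>
                             \<and> norm u < K \<and> norm v < K \<and> u \<noteq> v}.
             ereal (\<bar>H T \<omega> (\<theta>s + a T *v u) - H T \<omega> (\<theta>s + a T *v v)\<bar> / norm (u - v) powr q))"
  by (rule O_p1_of_rescaled_lipschitz_bound[OF \<open>0 < K\<close>, where g = "\<lambda>\<Lambda>. \<Lambda> * (2 * K) powr (1 - q)"])
     (use assms in \<open>auto intro!: abs_SUP_holder_quotient_le\<close>)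

end

theorem proposition3:
  fixes P :: "'w measure"
    and \<Theta> :: "(real^'p::finite) set"
    and \<theta>s :: "real^'p"
    and TT :: "real set"
    and H :: "real \<Rightarrow> 'w \<Rightarrow> real^'p \<Rightarrow> real"
    and a :: "real \<Rightarrow> real^'p^'p"
    and q R :: real
    and D1 :: "real \<Rightarrow> 'w \<Rightarrow> real^'p \<Rightarrow> (real^'p) \<Rightarrow>\<^sub>L real"
    and D2 :: "real \<Rightarrow> 'w \<Rightarrow> real^'p \<Rightarrow> (real^'p) \<Rightarrow>\<^sub>L ((real^'p) \<Rightarrow>\<^sub>L real)"
    and D3 :: "real \<Rightarrow> 'w \<Rightarrow> real^'p \<Rightarrow> (real^'p) \<Rightarrow>\<^sub>L ((real^'p) \<Rightarrow>\<^sub>L ((real^'p) \<Rightarrow>\<^sub>L real))"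
  assumes P: "prob_space P"
    and \<Theta>_open: "open \<Theta>" and \<Theta>_bdd: "bounded \<Theta>" and \<theta>s: "\<theta>s \<in> \<Theta>"
    and TT_nonneg: "TT \<subseteq> {0..}" and TT_unbdd: "\<not> bdd_above TT"
    and H_cont: "\<forall>T\<in>TT. \<forall>\<omega>\<in>space P. continuous_on (closure \<Theta>) (H T \<omega>)"
    and H_meas: "\<forall>T\<in>TT. \<forall>\<theta>\<in>closure \<Theta>. (\<lambda>\<omega>. H T \<omega> \<theta>) \<in> borel_measurable P"
    and a_diag: "\<forall>T\<in>TT. \<forall>i j. i \<noteq> j \<longrightarrow> a T $ i $ j = 0"
    and a_inv: "\<forall>T\<in>TT. invertible (a T)"
    and a_lim: "\<forall>\<epsilon>>0. \<exists>T0\<in>TT. \<forall>T\<in>TT. T \<ge> T0 \<longrightarrow> onorm (\<lambda>x. a T *v x) < \<epsilon>"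
    and q: "0 < q" "q \<le> 1"
    and R: "R > 0"
    and A7_i: "\<forall>T\<in>TT. AE \<omega> in P.
        thrice_diff_on (H T \<omega>) (D1 T \<omega>) (D2 T \<omega>) (D3 T \<omega>) {\<theta> \<in> \<Theta>. norm (\<theta> - \<theta>s) < R}"
    and A7_ii: "O_p1 P TT (\<lambda>T \<omega>. ereal (onorm (\<lambda>x. a T *v x) * norm (D1 T \<omega> \<theta>s)))"
    and A7_iii: "O_p1 P TT (\<lambda>T \<omega>. SUP \<theta>\<in>{\<theta> \<in> \<Theta>. norm (\<theta> - \<theta>s) < R}.
        ereal ((onorm (\<lambda>x. a T *v x))\<^sup>2 * norm (D2 T \<omega> \<theta>)))"
    and A7_iv: "O_p1 P TT (\<lambda>T \<omega>. SUP \<theta>\<in>{\<theta> \<in> \<Theta>. norm (\<theta> - \<theta>s) < R}.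
        ereal ((onorm (\<lambda>x. a T *v x))\<^sup>2 * norm (D3 T \<omega> \<theta>)))"
  shows "(\<forall>K>0. O_p1 P TT (\<lambda>T \<omega>.
            SUP u\<in>{u. \<theta>s + a T *v u \<in> closure \<Theta> \<and> norm u < K}.
              ereal \<bar>H T \<omega> (\<theta>s + a T *v u) - H T \<omega> \<theta>s\<bar>))
       \<and> (\<forall>K>0. O_p1 P TT (\<lambda>T \<omega>.
            SUP (u, v)\<in>{(u, v). \<theta>s + a T *v u \<in> closure \<Theta> \<and> \<theta>s + a T *v v \<in> closure \<Theta>
                              \<and> norm u < K \<and> norm v < K \<and> u \<noteq> v}.
              ereal (\<bar>H T \<omega> (\<theta>s + a T *v u) - H T \<omega> (\<theta>s + a T *v v)\<bar> / norm (u - v) powr q)))"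
proof -
  interpret rescaled_random_field P \<Theta> \<theta>s TT H a R D1 D2 D3
    by (intro rescaled_random_field.intro \<Theta>_open \<theta>s R a_lim A7_i A7_ii A7_iii)
  show ?thesis using tight_increments tight_holder_quotients \<open>q \<le> 1\<close> by blast
qed

end
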